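(* Let $M,N,Q$ be positive integers with $N\le M$, let $S=\{\vec b\in\mathbb{F}_2^M: H(\vec b)=N\}$, and let $\mathbf{G}\in\mathbb{F}_2^{Q\times M}$ be such that $\vec b\mapsto\mathbf{G}\vec b$ is injective on $S$. Let $\hat H=\sum_{i,j=1}^M h_{ij}\hat a_i^\dagger\hat a_j+\sum_{i,j,k,l=1}^M g_{ijkl}\hat a_i^\dagger\hat a_j^\dagger\hat a_k\hat a_l$ be a Hermitian operator with real coefficients $h_{ij},g_{ijkl}$, and let $\mathcal{E}(\hat H)=\sum_{\vec b,\vec b'\in S}\langle\vec b'|\hat H|\vec b\rangle\,|\mathbf{G}\vec b'\rangle\langle\mathbf{G}\vec b|$, an operator on $(\mathbb{C}^2)^{\otimes Q}$. Then $\mathcal{E}(\hat H)=\sum_{t=1}^{K}\hat H_t$, where each $\hat H_t$ is a linear combination of pairwise commuting Pauli strings (elements of $\{I,X,Y,Z\}^{\otimes Q}$), and the number $K$ of such groups satisfies $K=\mathcal{O}(M^4)$, i.e. $K\le cM^4$ for an absolute constant $c$ independent of $N,Q,\mathbf{G},h,g$.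
   Context: Fermionic operators are in the Jordan–Wigner representation on the Fock basis $\{|\vec b\rangle:\vec b\in\mathbb{F}_2^M\}$: $\hat a_j|\vec b\rangle=(-1)^{\sum_{m<j}\vec b[m]}|\vec b\oplus\vec e_j\rangle$ if $\vec b[j]=1$ and $\hat a_j|\vec b\rangle=0$ otherwise, and $\hat a_j^\dagger$ is its adjoint; $\vec e_j$ is the $j$-th unit vector. $H(\vec b)$ is Hamming weight. Such a Hamiltonian preserves the span of $\{|\vec b\rangle:\vec b\in S\}$. A set of pairwise commuting Pauli strings can be simultaneously diagonalised by a single Clifford unitary, so each group $\hat H_t$ corresponds to one Clifford measurement basis; the theorem bounds the number of Clifford measurement bases needed to estimate $\langle\mathcal{E}(\hat H)\rangle$. *)

theory Defs
  imports Complex_Main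
begin

text \<open>Bit vectors in F_2^n are modelled as functions nat => bool that vanish
  at indices >= n (indices 0..n-1 instead of 1..n).  Operators on the span of a
  finite set B of basis vectors are modelled by their matrix entries
  A x y = <x|A|y>.\<close>

definition bvecs :: "nat \<Rightarrow> (nat \<Rightarrow> bool) set" where
  "bvecs n = {b. \<forall>i. n \<le> i \<longrightarrow> \<not> b i}"

definition hamming :: "(nat \<Rightarrow> bool) \<Rightarrow> nat" where
  "hamming b = card {m. b m}"

definition mmul :: "'a set \<Rightarrow> ('a \<Rightarrow> 'a \<Rightarrow> complex) \<Rightarrow> ('a \<Rightarrow> 'a \<Rightarrow> complex) \<Rightarrow> ('a \<Rightarrow> 'a \<Rightarrow> complex)" where
  "mmul B A C = (\<lambda>x y. \<Sum>z\<in>B. A x z * C z y)"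

text \<open>Jordan-Wigner annihilation operator a_j:
  a_j |b> = (-1)^(sum_{m<j} b[m]) |b xor e_j> if b[j] = 1, else 0.\<close>
definition ann :: "nat \<Rightarrow> (nat \<Rightarrow> bool) \<Rightarrow> (nat \<Rightarrow> bool) \<Rightarrow> complex" where
  "ann j b' b = (if b j \<and> b' = b(j := False) then (-1) ^ card {m. m < j \<and> b m} else 0)"

definition cre :: "nat \<Rightarrow> (nat \<Rightarrow> bool) \<Rightarrow> (nat \<Rightarrow> bool) \<Rightarrow> complex" where
  "cre j b' b = cnj (ann j b b')"

definition fham :: "nat \<Rightarrow> (nat \<Rightarrow> nat \<Rightarrow> real) \<Rightarrow> (nat \<Rightarrow> nat \<Rightarrow> nat \<Rightarrow> nat \<Rightarrow> real)
    \<Rightarrow> (nat \<Rightarrow> bool) \<Rightarrow> (nat \<Rightarrow> bool) \<Rightarrow> complex" where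
  "fham M h g = (\<lambda>b' b.
     (\<Sum>i<M. \<Sum>j<M. complex_of_real (h i j) * mmul (bvecs M) (cre i) (ann j) b' b)
   + (\<Sum>i<M. \<Sum>j<M. \<Sum>k<M. \<Sum>l<M. complex_of_real (g i j k l) *
        mmul (bvecs M) (cre i) (mmul (bvecs M) (cre j) (mmul (bvecs M) (ann k) (ann l))) b' b))"

definition gmul :: "nat \<Rightarrow> nat \<Rightarrow> (nat \<Rightarrow> nat \<Rightarrow> bool) \<Rightarrow> (nat \<Rightarrow> bool) \<Rightarrow> (nat \<Rightarrow> bool)" where
  "gmul Q M G b = (\<lambda>q. q < Q \<and> odd (card {m. m < M \<and> G q m \<and> b m}))"

definition encode :: "nat \<Rightarrow> nat \<Rightarrow> (nat \<Rightarrow> nat \<Rightarrow> bool) \<Rightarrow> (nat \<Rightarrow> bool) set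
    \<Rightarrow> ((nat \<Rightarrow> bool) \<Rightarrow> (nat \<Rightarrow> bool) \<Rightarrow> complex) \<Rightarrow> (nat \<Rightarrow> bool) \<Rightarrow> (nat \<Rightarrow> bool) \<Rightarrow> complex" where
  "encode Q M G S H = (\<lambda>x y. \<Sum>b\<in>S. \<Sum>b'\<in>S.
      H b' b * (if x = gmul Q M G b' \<and> y = gmul Q M G b then 1 else 0))"

datatype pauli = PI | PX | PY | PZ

text \<open>Single-qubit Pauli matrices, basis |0> = False, |1> = True.\<close>
fun pmat :: "pauli \<Rightarrow> bool \<Rightarrow> bool \<Rightarrow> complex" where
  "pmat PI a b = (if a = b then 1 else 0)"
| "pmat PX a b = (if a \<noteq> b then 1 else 0)"
| "pmat PY a b = (if a = b then 0 else if a then \<i> else - \<i>)"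
| "pmat PZ a b = (if a = b then (if a then -1 else 1) else 0)"

definition pauli_strings :: "nat \<Rightarrow> (nat \<Rightarrow> pauli) set" where
  "pauli_strings Q = {P. \<forall>q. Q \<le> q \<longrightarrow> P q = PI}"

definition pstring_mat :: "nat \<Rightarrow> (nat \<Rightarrow> pauli) \<Rightarrow> (nat \<Rightarrow> bool) \<Rightarrow> (nat \<Rightarrow> bool) \<Rightarrow> complex" where
  "pstring_mat Q P = (\<lambda>x y. \<Prod>q<Q. pmat (P q) (x q) (y q))"

definition commuting_pauli_comb :: "nat \<Rightarrow> ((nat \<Rightarrow> bool) \<Rightarrow> (nat \<Rightarrow> bool) \<Rightarrow> complex) \<Rightarrow> bool" where
  "commuting_pauli_comb Q A \<longleftrightarrow>
     (\<exists>T c. finite T \<and> T \<subseteq> pauli_strings Q \<and>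
        (\<forall>P\<in>T. \<forall>P'\<in>T. mmul (bvecs Q) (pstring_mat Q P) (pstring_mat Q P')
                     = mmul (bvecs Q) (pstring_mat Q P') (pstring_mat Q P)) \<and>
        (\<forall>x\<in>bvecs Q. \<forall>y\<in>bvecs Q. A x y = (\<Sum>P\<in>T. c P * pstring_mat Q P x y)))"

end

theory Submission
  imports Defs "HOL-Library.FuncSet"
begin

text \<open>Each term \<open>a\<^sub>i\<^sup>\<dagger> a\<^sub>j\<close> or \<open>a\<^sub>i\<^sup>\<dagger> a\<^sub>j\<^sup>\<dagger> a\<^sub>k a\<^sub>l\<close> of the Hamiltonian sends a Fock state
  \<open>|b\<rangle>\<close> to a multiple of \<open>|b \<oplus> e\<^sub>i \<oplus> e\<^sub>j (\<oplus> e\<^sub>k \<oplus> e\<^sub>l)\<rangle>\<close>. Since \<open>b \<mapsto> G b\<close> is linear,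
  its encoding sends \<open>|x\<rangle>\<close> to a multiple of \<open>|x \<oplus> v\<rangle>\<close> for a vector \<open>v\<close> (a sum of
  columns of \<open>G\<close>) that depends only on the term. In the Pauli expansion of such a
  shift operator only strings whose X-part is \<open>v\<close> occur, and two such strings
  commute iff their numbers of \<open>Y\<close> factors have the same parity. So every term
  splits into two commuting groups, giving \<open>2M\<^sup>2 + 2M\<^sup>4 \<le> 4M\<^sup>4\<close> groups in total.\<close>

definition padded :: "nat \<Rightarrow> 'a \<Rightarrow> (nat \<Rightarrow> 'a) set" where
  "padded n d = {f. \<forall>i. n \<le> i \<longrightarrow> f i = d}"

lemma padded_eq_image_PiE:
  "padded n d = (\<lambda>g i. if i < n then g i else d) ` ({..<n} \<rightarrow>\<^sub>E UNIV)"
proof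
  show "padded n d \<subseteq> (\<lambda>g i. if i < n then g i else d) ` ({..<n} \<rightarrow>\<^sub>E UNIV)"
  proof
    fix f assume "f \<in> padded n d"
    then have "f = (\<lambda>i. if i < n then restrict f {..<n} i else d)"
      by (auto simp: padded_def fun_eq_iff)
    then show "f \<in> (\<lambda>g i. if i < n then g i else d) ` ({..<n} \<rightarrow>\<^sub>E UNIV)"
      by (intro image_eqI[where x = "restrict f {..<n}"]) simp_all
  qed
qed (simp add: padded_def image_subset_iff)

lemma inj_on_pad: "inj_on (\<lambda>g i. if i < n then g i else d) ({..<n} \<rightarrow>\<^sub>E UNIV)"
proof (rule inj_onI)
  fix g g' assume "g \<in> {..<n} \<rightarrow>\<^sub>E UNIV" "g' \<in> {..<n} \<rightarrow>\<^sub>E UNIV"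
    and eq: "(\<lambda>i. if i < n then g i else d) = (\<lambda>i. if i < n then g' i else d)"
  moreover have "g i = g' i" if "i < n" for i
    using fun_cong[OF eq, of i] that by simp
  ultimately show "g = g'"
    by (intro PiE_ext[of g "{..<n}" "\<lambda>_. UNIV"]) auto
qed

lemma finite_padded: "finite (padded n (d::'a::finite))"
  by (simp add: padded_eq_image_PiE finite_PiE)

lemma sum_prod_padded:
  fixes f :: "nat \<Rightarrow> 'a::finite \<Rightarrow> 'b::comm_semiring_1"
  shows "(\<Sum>z\<in>padded n d. \<Prod>q<n. f q (z q)) = (\<Prod>q<n. \<Sum>a\<in>UNIV. f q a)"
proof -
  have "(\<Sum>z\<in>padded n d. \<Prod>q<n. f q (z q)) = (\<Sum>g\<in>{..<n} \<rightarrow>\<^sub>E UNIV. \<Prod>q<n. f q (g q))"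
    unfolding padded_eq_image_PiE by (simp add: sum.reindex[OF inj_on_pad])
  also have "\<dots> = (\<Prod>q<n. \<Sum>a\<in>UNIV. f q a)"
    by (rule prod_sum_PiE[symmetric]) auto
  finally show ?thesis .
qed

lemma bvecs_eq_padded: "bvecs n = padded n False"
  by (auto simp: bvecs_def padded_def)

lemma pauli_strings_eq_padded: "pauli_strings n = padded n PI"
  by (auto simp: pauli_strings_def padded_def)

lemma UNIV_pauli: "(UNIV :: pauli set) = {PI, PX, PY, PZ}"
  by (auto intro: pauli.exhaust)

instance pauli :: finite
  by standard (simp add: UNIV_pauli)

lemma finite_bvecs: "finite (bvecs n)"
  by (simp add: bvecs_eq_padded finite_padded)

lemma finite_pauli_strings: "finite (pauli_strings n)"
  by (simp add: pauli_strings_eq_padded finite_padded)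

lemma bvecs_eqI:
  assumes "x \<in> bvecs n" "y \<in> bvecs n" "\<forall>q<n. x q = y q"
  shows "x = y"
proof
  fix q show "x q = y q"
    using assms unfolding bvecs_def by (cases "q < n") auto
qed

lemma pmat_orthogonal:
  "(\<Sum>p\<in>UNIV. cnj (pmat p a' b') * pmat p a b) = (if a' = a \<and> b' = b then 2 else 0)"
  by (cases a; cases b; cases a'; cases b') (simp_all add: UNIV_pauli)

lemma pstring_mat_orthogonal:
  assumes "x \<in> bvecs Q" "y \<in> bvecs Q" "x' \<in> bvecs Q" "y' \<in> bvecs Q"
  shows "(\<Sum>P\<in>pauli_strings Q. cnj (pstring_mat Q P x' y') * pstring_mat Q P x y)
        = (if x' = x \<and> y' = y then 2 ^ Q else 0)"
proof -
  have "(\<Sum>P\<in>pauli_strings Q. cnj (pstring_mat Q P x' y') * pstring_mat Q P x y)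
      = (\<Prod>q<Q. \<Sum>p\<in>UNIV. cnj (pmat p (x' q) (y' q)) * pmat p (x q) (y q))"
    unfolding pauli_strings_eq_padded pstring_mat_def
    by (simp add: cnj_prod prod.distrib[symmetric]
        sum_prod_padded[where f = "\<lambda>q p. cnj (pmat p (x' q) (y' q)) * pmat p (x q) (y q)"])
  also have "\<dots> = (\<Prod>q<Q. if x' q = x q \<and> y' q = y q then 2 else 0)"
    by (simp add: pmat_orthogonal)
  also have "\<dots> = (if x' = x \<and> y' = y then 2 ^ Q else 0)"
  proof (cases "x' = x \<and> y' = y")
    case False
    then have "\<exists>q<Q. \<not> (x' q = x q \<and> y' q = y q)"
      using bvecs_eqI assms by metis
    then show ?thesis
      using False by (auto intro: prod_zero)
  qed simp
  finally show ?thesis .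
qed

definition pauli_coeff ::
    "nat \<Rightarrow> ((nat \<Rightarrow> bool) \<Rightarrow> (nat \<Rightarrow> bool) \<Rightarrow> complex) \<Rightarrow> (nat \<Rightarrow> pauli) \<Rightarrow> complex" where
  "pauli_coeff Q A P = (\<Sum>x\<in>bvecs Q. \<Sum>y\<in>bvecs Q. cnj (pstring_mat Q P x y) * A x y) / 2 ^ Q"

lemma pauli_expansion:
  assumes "x \<in> bvecs Q" "y \<in> bvecs Q"
  shows "A x y = (\<Sum>P\<in>pauli_strings Q. pauli_coeff Q A P * pstring_mat Q P x y)"
proof -
  have "(\<Sum>P\<in>pauli_strings Q. pauli_coeff Q A P * pstring_mat Q P x y)
      = (\<Sum>P\<in>pauli_strings Q. \<Sum>x'\<in>bvecs Q. \<Sum>y'\<in>bvecs Q.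
           A x' y' * (cnj (pstring_mat Q P x' y') * pstring_mat Q P x y)) / 2 ^ Q"
    unfolding pauli_coeff_def sum_divide_distrib sum_distrib_right
    by (simp add: mult_ac)
  also have "\<dots> = (\<Sum>x'\<in>bvecs Q. \<Sum>y'\<in>bvecs Q. A x' y' *
      (\<Sum>P\<in>pauli_strings Q. cnj (pstring_mat Q P x' y') * pstring_mat Q P x y)) / 2 ^ Q"
    by (simp only: sum.swap[of _ "pauli_strings Q"] sum_distrib_left)
  also have "\<dots> = (\<Sum>x'\<in>bvecs Q. \<Sum>y'\<in>bvecs Q.
      if y' = y then if x' = x then A x y * 2 ^ Q else 0 else 0) / 2 ^ Q"
    by (intro arg_cong[where f = "\<lambda>t. t / 2 ^ Q"] sum.cong refl)
       (simp add: pstring_mat_orthogonal assms)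
  also have "\<dots> = A x y"
    using assms by (simp add: finite_bvecs)
  finally show ?thesis ..
qed

lemma mmul_pstring_mat:
  "mmul (bvecs Q) (pstring_mat Q P) (pstring_mat Q P') x y
     = (\<Prod>q<Q. \<Sum>a\<in>UNIV. pmat (P q) (x q) a * pmat (P' q) a (y q))"
  unfolding mmul_def pstring_mat_def bvecs_eq_padded
  by (simp add: prod.distrib[symmetric]
      sum_prod_padded[where f = "\<lambda>q a. pmat (P q) (x q) a * pmat (P' q) a (y q)"])

definition pauli_flips :: "pauli \<Rightarrow> bool" where
  "pauli_flips p \<longleftrightarrow> p = PX \<or> p = PY"

definition y_sign :: "pauli \<Rightarrow> complex" where
  "y_sign p = (if p = PY then -1 else 1)"

definition pstring_y_sign :: "nat \<Rightarrow> (nat \<Rightarrow> pauli) \<Rightarrow> complex" where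
  "pstring_y_sign Q P = (\<Prod>q<Q. y_sign (P q))"

definition pstrings_flipping :: "nat \<Rightarrow> (nat \<Rightarrow> bool) \<Rightarrow> (nat \<Rightarrow> pauli) set" where
  "pstrings_flipping Q v = {P \<in> pauli_strings Q. \<forall>q<Q. pauli_flips (P q) = v q}"

lemma pstring_y_sign_cases: "pstring_y_sign Q P = 1 \<or> pstring_y_sign Q P = -1"
  unfolding pstring_y_sign_def by (induction Q) (auto simp: y_sign_def)

lemma pmat_eq_0: "pauli_flips p \<longleftrightarrow> a = b \<Longrightarrow> pmat p a b = 0"
  by (cases p) (auto simp: pauli_flips_def)

text \<open>Two Pauli matrices with the same X-part anticommute exactly when one is \<open>X\<close>
  and the other is \<open>Y\<close>.\<close>
lemma pmat_mult_commute:
  assumes "pauli_flips p \<longleftrightarrow> pauli_flips p'"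
  shows "(\<Sum>a\<in>UNIV. pmat p x a * pmat p' a y)
       = y_sign p * y_sign p' * (\<Sum>a\<in>UNIV. pmat p' x a * pmat p a y)"
  using assms
  by (cases p; cases p'; cases x; cases y) (simp_all add: pauli_flips_def y_sign_def UNIV_bool)

lemma pstring_mat_commute:
  assumes "P \<in> pstrings_flipping Q v" "P' \<in> pstrings_flipping Q v"
    and "pstring_y_sign Q P = pstring_y_sign Q P'"
  shows "mmul (bvecs Q) (pstring_mat Q P) (pstring_mat Q P')
       = mmul (bvecs Q) (pstring_mat Q P') (pstring_mat Q P)"
proof (intro ext)
  fix x y
  have "(\<Prod>q<Q. \<Sum>a\<in>UNIV. pmat (P q) (x q) a * pmat (P' q) a (y q))
      = (\<Prod>q<Q. y_sign (P q) * y_sign (P' q) * (\<Sum>a\<in>UNIV. pmat (P' q) (x q) a * pmat (P q) a (y q)))"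
    using assms(1,2) by (intro prod.cong refl pmat_mult_commute) (auto simp: pstrings_flipping_def)
  also have "\<dots> = pstring_y_sign Q P * pstring_y_sign Q P'
      * (\<Prod>q<Q. \<Sum>a\<in>UNIV. pmat (P' q) (x q) a * pmat (P q) a (y q))"
    by (simp add: pstring_y_sign_def prod.distrib)
  also have "pstring_y_sign Q P * pstring_y_sign Q P' = 1"
    using assms(3) pstring_y_sign_cases[of Q P] by auto
  finally show "mmul (bvecs Q) (pstring_mat Q P) (pstring_mat Q P') x y
      = mmul (bvecs Q) (pstring_mat Q P') (pstring_mat Q P) x y"
    by (simp add: mmul_pstring_mat)
qed

lemma commuting_pauli_comb_flipping:
  assumes "T \<subseteq> pstrings_flipping Q v" "\<forall>P\<in>T. pstring_y_sign Q P = s"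
  shows "commuting_pauli_comb Q (\<lambda>x y. \<Sum>P\<in>T. c P * pstring_mat Q P x y)"
  unfolding commuting_pauli_comb_def
proof (intro exI[of _ T] exI[of _ c] conjI ballI)
  show "T \<subseteq> pauli_strings Q"
    using assms(1) by (auto simp: pstrings_flipping_def)
  then show "finite T"
    using finite_pauli_strings finite_subset by blast
  fix P P' assume "P \<in> T" "P' \<in> T"
  then show "mmul (bvecs Q) (pstring_mat Q P) (pstring_mat Q P')
      = mmul (bvecs Q) (pstring_mat Q P') (pstring_mat Q P)"
    using assms by (intro pstring_mat_commute[of _ Q v]) auto
qed simp

definition bxor :: "(nat \<Rightarrow> bool) \<Rightarrow> (nat \<Rightarrow> bool) \<Rightarrow> nat \<Rightarrow> bool" where
  "bxor x y = (\<lambda>q. x q \<noteq> y q)"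

lemma bxor_assoc: "bxor (bxor x y) z = bxor x (bxor y z)"
  by (auto simp: bxor_def fun_eq_iff)

lemma pauli_coeff_eq_0:
  assumes "\<forall>x\<in>bvecs Q. \<forall>y\<in>bvecs Q. A x y \<noteq> 0 \<longrightarrow> x = bxor y v"
    and "P \<in> pauli_strings Q" "P \<notin> pstrings_flipping Q v"
  shows "pauli_coeff Q A P = 0"
proof -
  obtain q where q: "q < Q" "pauli_flips (P q) \<noteq> v q"
    using assms(2,3) by (auto simp: pstrings_flipping_def)
  have "cnj (pstring_mat Q P x y) * A x y = 0" if "x \<in> bvecs Q" "y \<in> bvecs Q" for x y
  proof (cases "A x y = 0")
    case False
    then have "x = bxor y v"
      using assms(1) that by blast
    then have "pmat (P q) (x q) (y q) = 0"
      using q by (intro pmat_eq_0) (auto simp: bxor_def)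
    then have "pstring_mat Q P x y = 0"
      unfolding pstring_mat_def using q(1) by (intro prod_zero) auto
    then show ?thesis by simp
  qed simp
  then show ?thesis
    unfolding pauli_coeff_def by (simp add: sum.neutral)
qed

definition commuting_decomp ::
    "nat \<Rightarrow> nat \<Rightarrow> ((nat \<Rightarrow> bool) \<Rightarrow> (nat \<Rightarrow> bool) \<Rightarrow> complex) \<Rightarrow> bool" where
  "commuting_decomp Q K A \<longleftrightarrow> (\<exists>Ht. (\<forall>t<K. commuting_pauli_comb Q (Ht t)) \<and>
      (\<forall>x\<in>bvecs Q. \<forall>y\<in>bvecs Q. A x y = (\<Sum>t<K. Ht t x y)))"

lemma commuting_decomp_shift:
  assumes "\<forall>x\<in>bvecs Q. \<forall>y\<in>bvecs Q. A x y \<noteq> 0 \<longrightarrow> x = bxor y v"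
  shows "commuting_decomp Q 2 A"
  unfolding commuting_decomp_def
proof (intro exI conjI allI impI ballI)
  define T where "T t = {P \<in> pstrings_flipping Q v. pstring_y_sign Q P = (-1) ^ t}" for t :: nat
  define Ht where "Ht t x y = (\<Sum>P\<in>T t. pauli_coeff Q A P * pstring_mat Q P x y)" for t x y
  show "commuting_pauli_comb Q (Ht t)" for t
    unfolding Ht_def by (rule commuting_pauli_comb_flipping) (auto simp: T_def)
  have finite_T: "finite (T t)" for t
    using finite_pauli_strings by (rule finite_subset[rotated]) (auto simp: T_def pstrings_flipping_def)
  fix x y assume "x \<in> bvecs Q" "y \<in> bvecs Q"
  then have "A x y = (\<Sum>P\<in>pauli_strings Q. pauli_coeff Q A P * pstring_mat Q P x y)"
    by (rule pauli_expansion)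
  also have "\<dots> = (\<Sum>P\<in>pstrings_flipping Q v. pauli_coeff Q A P * pstring_mat Q P x y)"
    using assms
    by (intro sum.mono_neutral_right) (auto simp: finite_pauli_strings pauli_coeff_eq_0 pstrings_flipping_def)
  also have "pstrings_flipping Q v = T 0 \<union> T 1"
    using pstring_y_sign_cases by (auto simp: T_def)
  also have "(\<Sum>P\<in>T 0 \<union> T 1. pauli_coeff Q A P * pstring_mat Q P x y) = Ht 0 x y + Ht 1 x y"
    unfolding Ht_def by (rule sum.union_disjoint[OF finite_T finite_T]) (auto simp: T_def)
  also have "\<dots> = (\<Sum>t<2. Ht t x y)"
    by (simp add: numeral_2_eq_2)
  finally show "A x y = (\<Sum>t<2. Ht t x y)" .
qed

lemma commuting_decomp_add:
  assumes "commuting_decomp Q K A" "commuting_decomp Q L B"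
  shows "commuting_decomp Q (K + L) (\<lambda>x y. A x y + B x y)"
proof -
  obtain HA where HA: "\<forall>t<K. commuting_pauli_comb Q (HA t)"
      "\<forall>x\<in>bvecs Q. \<forall>y\<in>bvecs Q. A x y = (\<Sum>t<K. HA t x y)"
    using assms(1) unfolding commuting_decomp_def by blast
  obtain HB where HB: "\<forall>t<L. commuting_pauli_comb Q (HB t)"
      "\<forall>x\<in>bvecs Q. \<forall>y\<in>bvecs Q. B x y = (\<Sum>t<L. HB t x y)"
    using assms(2) unfolding commuting_decomp_def by blast
  have sum_split: "(\<Sum>t<K + L. f t) = (\<Sum>t<K. f t) + (\<Sum>t<L. f (K + t))" for f :: "nat \<Rightarrow> complex"
    by (induction L) (simp_all add: add_ac)
  show ?thesis
    unfolding commuting_decomp_def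
    by (rule exI[of _ "\<lambda>t. if t < K then HA t else HB (t - K)"]) (auto simp: HA HB sum_split)
qed

lemma commuting_decomp_sum:
  assumes "finite I" "\<forall>i\<in>I. commuting_decomp Q K (A i)"
  shows "commuting_decomp Q (K * card I) (\<lambda>x y. \<Sum>i\<in>I. A i x y)"
  using assms
proof (induction I rule: finite_induct)
  case empty
  then show ?case by (simp add: commuting_decomp_def)
next
  case (insert i I)
  then have "commuting_decomp Q (K + K * card I) (\<lambda>x y. A i x y + (\<Sum>i\<in>I. A i x y))"
    by (intro commuting_decomp_add) auto
  then show ?case
    using insert by simp
qed

definition flip :: "nat \<Rightarrow> (nat \<Rightarrow> bool) \<Rightarrow> nat \<Rightarrow> bool" where
  "flip j b = b(j := \<not> b j)"

lemma ann_nonzero_imp: "ann j b' b \<noteq> 0 \<Longrightarrow> b' = flip j b"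
  unfolding ann_def flip_def by (auto split: if_splits)

lemma cre_nonzero_imp: "cre j b' b \<noteq> 0 \<Longrightarrow> b' = flip j b"
  unfolding cre_def ann_def flip_def by (auto split: if_splits simp: fun_eq_iff)

lemma mmul_nonzero_imp: "mmul B A C x y \<noteq> 0 \<Longrightarrow> \<exists>z. A x z \<noteq> 0 \<and> C z y \<noteq> 0"
  unfolding mmul_def by (metis (mono_tags, lifting) mult_eq_0_iff sum.neutral)

lemma one_body_nonzero_imp:
  assumes "mmul B (cre i) (ann j) b' b \<noteq> 0"
  shows "b' = flip i (flip j b)"
proof -
  obtain z where "cre i b' z \<noteq> 0" "ann j z b \<noteq> 0"
    using mmul_nonzero_imp[OF assms] by blast
  then show ?thesis
    by (auto dest!: cre_nonzero_imp ann_nonzero_imp)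
qed

lemma two_body_nonzero_imp:
  assumes "mmul B (cre i) (mmul B (cre j) (mmul B (ann k) (ann l))) b' b \<noteq> 0"
  shows "b' = flip i (flip j (flip k (flip l b)))"
proof -
  obtain z1 where "cre i b' z1 \<noteq> 0" "mmul B (cre j) (mmul B (ann k) (ann l)) z1 b \<noteq> 0"
    using mmul_nonzero_imp[OF assms] by blast
  moreover obtain z2 where "cre j z1 z2 \<noteq> 0" "mmul B (ann k) (ann l) z2 b \<noteq> 0"
    using mmul_nonzero_imp[OF calculation(2)] by blast
  moreover obtain z3 where "ann k z2 z3 \<noteq> 0" "ann l z3 b \<noteq> 0"
    using mmul_nonzero_imp[OF calculation(4)] by blast
  ultimately show ?thesis
    by (auto dest!: cre_nonzero_imp ann_nonzero_imp)
qed

definition gcol :: "nat \<Rightarrow> (nat \<Rightarrow> nat \<Rightarrow> bool) \<Rightarrow> nat \<Rightarrow> nat \<Rightarrow> bool" where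
  "gcol Q G j = (\<lambda>q. q < Q \<and> G q j)"

lemma gmul_flip:
  assumes "j < M"
  shows "gmul Q M G (flip j b) = bxor (gmul Q M G b) (gcol Q G j)"
proof
  fix q
  define C where "C = {m. m < M \<and> G q m \<and> b m}"
  have "finite C"
    by (simp add: C_def)
  have "odd (card {m. m < M \<and> G q m \<and> flip j b m}) \<longleftrightarrow> odd (card C) \<noteq> G q j"
  proof (cases "G q j")
    case False
    then have "{m. m < M \<and> G q m \<and> flip j b m} = C"
      by (auto simp: C_def flip_def)
    then show ?thesis
      using False by simp
  next
    case True
    show ?thesis
    proof (cases "b j")
      case True
      with \<open>G q j\<close> assms have "j \<in> C" "{m. m < M \<and> G q m \<and> flip j b m} = C - {j}"
        by (auto simp: C_def flip_def)
      then show ?thesis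
        using \<open>finite C\<close> \<open>G q j\<close> card.remove[of C j] by auto
    next
      case False
      with \<open>G q j\<close> assms have "j \<notin> C" "{m. m < M \<and> G q m \<and> flip j b m} = insert j C"
        by (auto simp: C_def flip_def)
      then show ?thesis
        using \<open>finite C\<close> \<open>G q j\<close> by simp
    qed
  qed
  then show "gmul Q M G (flip j b) q = bxor (gmul Q M G b) (gcol Q G j) q"
    by (auto simp: gmul_def bxor_def gcol_def C_def)
qed

lemma encode_add:
  "encode Q M G S (\<lambda>b' b. F b' b + F' b' b) = (\<lambda>x y. encode Q M G S F x y + encode Q M G S F' x y)"
  unfolding encode_def by (intro ext) (simp add: distrib_right sum.distrib)

lemma encode_sum:
  "encode Q M G S (\<lambda>b' b. \<Sum>i\<in>I. F i b' b) = (\<lambda>x y. \<Sum>i\<in>I. encode Q M G S (F i) x y)"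
  unfolding encode_def
  by (intro ext) (simp add: sum_distrib_right sum.swap[of _ I])

lemma encode_nonzero_imp:
  assumes "\<forall>b b'. F b' b \<noteq> 0 \<longrightarrow> gmul Q M G b' = bxor (gmul Q M G b) v"
    and "encode Q M G S F x y \<noteq> 0"
  shows "x = bxor y v"
proof -
  obtain b b' where "F b' b * (if x = gmul Q M G b' \<and> y = gmul Q M G b then 1 else 0) \<noteq> 0"
    using assms(2) unfolding encode_def by (meson sum.neutral)
  then show ?thesis
    using assms(1) by (auto split: if_splits)
qed

lemma commuting_decomp_encode_shift:
  assumes "\<forall>b b'. F b' b \<noteq> 0 \<longrightarrow> gmul Q M G b' = bxor (gmul Q M G b) v"
  shows "commuting_decomp Q 2 (encode Q M G S F)"
  using assms encode_nonzero_imp by (intro commuting_decomp_shift) blast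

lemma commuting_decomp_one_body:
  assumes "i < M" "j < M"
  shows "commuting_decomp Q 2 (encode Q M G S (\<lambda>b' b. c * mmul (bvecs M) (cre i) (ann j) b' b))"
proof (intro commuting_decomp_encode_shift allI impI)
  fix b b' assume "c * mmul (bvecs M) (cre i) (ann j) b' b \<noteq> 0"
  then have "b' = flip i (flip j b)"
    by (metis mult_zero_right one_body_nonzero_imp)
  then show "gmul Q M G b' = bxor (gmul Q M G b) (bxor (gcol Q G j) (gcol Q G i))"
    using assms by (simp add: gmul_flip bxor_assoc)
qed

lemma commuting_decomp_two_body:
  assumes "i < M" "j < M" "k < M" "l < M"
  shows "commuting_decomp Q 2 (encode Q M G S (\<lambda>b' b. c *
    mmul (bvecs M) (cre i) (mmul (bvecs M) (cre j) (mmul (bvecs M) (ann k) (ann l))) b' b))"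
proof (intro commuting_decomp_encode_shift allI impI)
  fix b b' assume
    "c * mmul (bvecs M) (cre i) (mmul (bvecs M) (cre j) (mmul (bvecs M) (ann k) (ann l))) b' b \<noteq> 0"
  then have "b' = flip i (flip j (flip k (flip l b)))"
    by (metis mult_zero_right two_body_nonzero_imp)
  then show "gmul Q M G b'
      = bxor (gmul Q M G b) (bxor (bxor (bxor (gcol Q G l) (gcol Q G k)) (gcol Q G j)) (gcol Q G i))"
    using assms by (simp add: gmul_flip bxor_assoc)
qed

lemma commuting_decomp_fham:
  "commuting_decomp Q (2 * M ^ 2 + 2 * M ^ 4) (encode Q M G S (fham M h g))"
proof -
  let ?one = "\<lambda>i j. encode Q M G S (\<lambda>b' b. complex_of_real (h i j) * mmul (bvecs M) (cre i) (ann j) b' b)"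
  let ?two = "\<lambda>i j k l. encode Q M G S (\<lambda>b' b. complex_of_real (g i j k l) *
    mmul (bvecs M) (cre i) (mmul (bvecs M) (cre j) (mmul (bvecs M) (ann k) (ann l))) b' b)"
  have "commuting_decomp Q (2 * M * M) (\<lambda>x y. \<Sum>i<M. \<Sum>j<M. ?one i j x y)"
    by (intro commuting_decomp_sum[of "{..<M}", simplified] ballI commuting_decomp_one_body) auto
  moreover have "commuting_decomp Q (2 * M * M * M * M)
      (\<lambda>x y. \<Sum>i<M. \<Sum>j<M. \<Sum>k<M. \<Sum>l<M. ?two i j k l x y)"
    by (intro commuting_decomp_sum[of "{..<M}", simplified] ballI commuting_decomp_two_body) auto
  moreover have "encode Q M G S (fham M h g)
      = (\<lambda>x y. (\<Sum>i<M. \<Sum>j<M. ?one i j x y) + (\<Sum>i<M. \<Sum>j<M. \<Sum>k<M. \<Sum>l<M. ?two i j k l x y))"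
    unfolding fham_def by (simp only: encode_add encode_sum)
  ultimately show ?thesis
    using commuting_decomp_add by (fastforce simp: power2_eq_square power4_eq_xxxx mult.assoc)
qed

lemma encode_fham_commuting_groups:
  "\<exists>K Ht. real K \<le> 4 * real M ^ 4 \<and> (\<forall>t<K. commuting_pauli_comb Q (Ht t)) \<and>
     (\<forall>x\<in>bvecs Q. \<forall>y\<in>bvecs Q. encode Q M G S (fham M h g) x y = (\<Sum>t<K. Ht t x y))"
proof -
  define K where "K = 2 * M ^ 2 + 2 * M ^ 4"
  have "M ^ 2 \<le> M ^ 4"
    by (cases "M = 0") (simp_all add: power_increasing)
  then have "real K \<le> 4 * real M ^ 4"
    unfolding K_def by (simp flip: of_nat_power)
  moreover have "commuting_decomp Q K (encode Q M G S (fham M h g))"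
    unfolding K_def by (rule commuting_decomp_fham)
  ultimately show ?thesis
    unfolding commuting_decomp_def by blast
qed

theorem theorem2:
  shows "\<exists>c::real. \<forall>(M::nat) (N::nat) (Q::nat) (G::nat \<Rightarrow> nat \<Rightarrow> bool)
            (h::nat \<Rightarrow> nat \<Rightarrow> real) (g::nat \<Rightarrow> nat \<Rightarrow> nat \<Rightarrow> nat \<Rightarrow> real).
     0 < M \<and> 0 < N \<and> 0 < Q \<and> N \<le> M \<and>
     inj_on (gmul Q M G) {b \<in> bvecs M. hamming b = N} \<and>
     (\<forall>b\<in>bvecs M. \<forall>b'\<in>bvecs M. fham M h g b' b = cnj (fham M h g b b'))
     \<longrightarrow>
     (\<exists>(K::nat) (Ht::nat \<Rightarrow> (nat \<Rightarrow> bool) \<Rightarrow> (nat \<Rightarrow> bool) \<Rightarrow> complex).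
        real K \<le> c * real M ^ 4 \<and>
        (\<forall>t<K. commuting_pauli_comb Q (Ht t)) \<and>
        (\<forall>x\<in>bvecs Q. \<forall>y\<in>bvecs Q.
           encode Q M G {b \<in> bvecs M. hamming b = N} (fham M h g) x y = (\<Sum>t<K. Ht t x y)))"
  by (intro exI[of _ 4] allI impI encode_fham_commuting_groups)

end
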